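(* Let $(M^n,g)$ be a Riemannian manifold with $n/2$ an even integer, $x\in M$ and $\varepsilon\in\{+,-\}$. Suppose $W^{-\varepsilon}(x)=0$ and there are a non-zero $n/2$-form $u\in\Lambda^{n/2}T^*_xM$ with $*u=\varepsilon u$ and $\lambda\in\mathbb R$ such that $\mathcal R_{\varepsilon,n/2}(x)=\lambda\,\mathrm{Id}-u\otimes u$. Then $n=4$ and $u$ is colinear to $g(J\cdot,\cdot)$ for some $g$-orthogonal complex structure $J$ on $T_xM$.
   Context: The Bochner–Weitzenböck curvature $\mathcal R_k$ is the field of symmetric endomorphisms of $\Lambda^kT^*M$ such that $(dd^*+d^*d)\xi=\nabla^*\nabla\xi+\mathcal R_k\xi$ for every $k$-form $\xi$. When $n/2$ is even, the Hodge star satisfies $*^2=\mathrm{Id}$ on $\Lambda^{n/2}$; $\Lambda^{n/2}_\pm$ are its $\pm1$ eigenspaces, $\mathcal R_{\pm,n/2}$ the restrictions of $\mathcal R_{n/2}$ (which commutes with $*$) to them, and $W^\pm$ the corresponding parts of the Weyl tensor. $u\otimes u$ is $\alpha\mapsto\langle u,\alpha\rangle u$. *)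

theory Defs
  imports Complex_Main "HOL-Combinatorics.Permutations"
begin

text \<open>Pointwise (algebraic) setting at a point x of an n-dimensional Riemannian
manifold: we identify (T_xM, g_x) with R^n with its standard inner product via an
orthonormal (oriented) basis e_0, ..., e_(n-1). The Riemann curvature tensor at x
is given by its components R i j k l = g(R(e_i,e_j)e_k, e_l), normalised so that
R i j i j is the sectional curvature of the plane spanned by e_i, e_j.
A k-form is given by its components on index lists: w [i1,...,ik] = w(e_i1,...,e_ik).\<close>

definition idx_lists :: "nat \<Rightarrow> nat \<Rightarrow> nat list set" where
  "idx_lists n k = {xs. length xs = k \<and> set xs \<subseteq> {..<n}}"

definition is_form :: "nat \<Rightarrow> nat \<Rightarrow> (nat list \<Rightarrow> real) \<Rightarrow> bool" where
  "is_form n k w \<longleftrightarrow>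
     (\<forall>xs. xs \<notin> idx_lists n k \<longrightarrow> w xs = 0) \<and>
     (\<forall>xs i j. xs \<in> idx_lists n k \<longrightarrow> i < j \<longrightarrow> j < k \<longrightarrow>
        w (xs[i := xs ! j, j := xs ! i]) = - w xs)"

text \<open>Inner product on k-forms (the basis e^I, I increasing, is orthonormal).\<close>
definition form_inner :: "nat \<Rightarrow> nat \<Rightarrow> (nat list \<Rightarrow> real) \<Rightarrow> (nat list \<Rightarrow> real) \<Rightarrow> real" where
  "form_inner n k a b = (\<Sum>xs\<in>idx_lists n k. a xs * b xs) / fact k"

definition levi_civita :: "nat \<Rightarrow> nat list \<Rightarrow> real" where
  "levi_civita n xs =
     (if length xs = n \<and> distinct xs \<and> set xs = {..<n}
      then of_int (sign (\<lambda>i. if i < n then xs ! i else i)) else 0)"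

definition hodge :: "nat \<Rightarrow> nat \<Rightarrow> (nat list \<Rightarrow> real) \<Rightarrow> (nat list \<Rightarrow> real)" where
  "hodge n k a = (\<lambda>ys. if ys \<in> idx_lists n (n - k)
      then (\<Sum>xs\<in>idx_lists n k. a xs * levi_civita n (xs @ ys)) / fact k else 0)"

definition algebraic_curvature_tensor :: "nat \<Rightarrow> (nat \<Rightarrow> nat \<Rightarrow> nat \<Rightarrow> nat \<Rightarrow> real) \<Rightarrow> bool" where
  "algebraic_curvature_tensor n R \<longleftrightarrow>
    (\<forall>i<n. \<forall>j<n. \<forall>k<n. \<forall>l<n.
       R i j k l = - R j i k l \<and> R i j k l = - R i j l k \<and> R i j k l = R k l i j \<and>
       R i j k l + R j k i l + R k i j l = 0)"

definition ricci :: "nat \<Rightarrow> (nat \<Rightarrow> nat \<Rightarrow> nat \<Rightarrow> nat \<Rightarrow> real) \<Rightarrow> nat \<Rightarrow> nat \<Rightarrow> real" where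
  "ricci n R a b = (\<Sum>c<n. R c a c b)"

definition scal :: "nat \<Rightarrow> (nat \<Rightarrow> nat \<Rightarrow> nat \<Rightarrow> nat \<Rightarrow> real) \<Rightarrow> real" where
  "scal n R = (\<Sum>a<n. ricci n R a a)"

definition kron :: "nat \<Rightarrow> nat \<Rightarrow> real" where
  "kron a b = (if a = b then 1 else 0)"

definition kn_prod :: "(nat \<Rightarrow> nat \<Rightarrow> real) \<Rightarrow> (nat \<Rightarrow> nat \<Rightarrow> real) \<Rightarrow> nat \<Rightarrow> nat \<Rightarrow> nat \<Rightarrow> nat \<Rightarrow> real" where
  "kn_prod h k a b c d = h a c * k b d + h b d * k a c - h a d * k b c - h b c * k a d"

definition weyl :: "nat \<Rightarrow> (nat \<Rightarrow> nat \<Rightarrow> nat \<Rightarrow> nat \<Rightarrow> real) \<Rightarrow> nat \<Rightarrow> nat \<Rightarrow> nat \<Rightarrow> nat \<Rightarrow> real" where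
  "weyl n R a b c d = R a b c d -
     kn_prod (\<lambda>i j. ricci n R i j - scal n R / (2 * (real n - 1)) * kron i j) kron a b c d
       / (real n - 2)"

text \<open>Bochner--Weitzenboeck curvature R_k acting on k-forms (so that
dd^* + d^*d = nabla^* nabla + R_k), in components:
(R_k w)_{a_1..a_k} = sum_s Ric_{a_s b} w_{..b..} - 2 sum_{s<t} R_{a_s b a_t c} w_{..b..c..}.\<close>
definition weitz :: "nat \<Rightarrow> (nat \<Rightarrow> nat \<Rightarrow> nat \<Rightarrow> nat \<Rightarrow> real) \<Rightarrow> nat \<Rightarrow>
    (nat list \<Rightarrow> real) \<Rightarrow> (nat list \<Rightarrow> real)" where
  "weitz n R k w = (\<lambda>xs. if xs \<in> idx_lists n k then
      (\<Sum>s<k. \<Sum>b<n. ricci n R (xs ! s) b * w (xs[s := b]))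
      - 2 * (\<Sum>s<k. \<Sum>t\<in>{s<..<k}. \<Sum>b<n. \<Sum>c<n.
               R (xs ! s) b (xs ! t) c * w (xs[s := b, t := c]))
    else 0)"

text \<open>Action of the Weyl tensor on k-forms (the Weyl part of R_k); W^{+-} are its
restrictions to the (+-1)-eigenspaces of the Hodge star on middle-degree forms.\<close>
definition weyl_op :: "nat \<Rightarrow> (nat \<Rightarrow> nat \<Rightarrow> nat \<Rightarrow> nat \<Rightarrow> real) \<Rightarrow> nat \<Rightarrow>
    (nat list \<Rightarrow> real) \<Rightarrow> (nat list \<Rightarrow> real)" where
  "weyl_op n R k = weitz n (weyl n R) k"

text \<open>Orthogonal complex structure J on R^n, J e_a = sum_b J b a e_b.\<close>
definition orth_complex_structure :: "nat \<Rightarrow> (nat \<Rightarrow> nat \<Rightarrow> real) \<Rightarrow> bool" where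
  "orth_complex_structure n J \<longleftrightarrow>
     (\<forall>a<n. \<forall>b<n. (\<Sum>c<n. J a c * J c b) = - kron a b) \<and>
     (\<forall>a<n. \<forall>b<n. (\<Sum>c<n. J c a * J c b) = kron a b)"

end

theory Submission
  imports Defs "HOL-Combinatorics.Multiset_Permutations"
begin

text \<open>Let k = n/2. For a basis k-form e^I put P = e^I + \<epsilon> *e^I and M = e^I - \<epsilon> *e^I, so
that *P = \<epsilon> P and *M = -\<epsilon> M. At a multi-index J sharing three slots with I, no curvature
term of the Weitzenboeck operator can turn J into a multi-index supported on the complement of
I, so the *e^I-parts of P and M are invisible there. Hence W^{-\<epsilon>} M = 0 forces the Weyl part
to vanish on e^I at J, and R_k P is the scalar Schouten contribution times e^I at J. Comparing
with R_{\<epsilon>} P = \<lambda> P - 2 u_I u at J = I and at J = I with its first index replaced by some b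
outside I gives u_I^2 = u_J^2 and u_I u_J = 0; so u = 0 as soon as k \<ge> 4. Thus n = 4, and a
self-dual 2-form u on R^4, read as a skew matrix, squares to a negative multiple of the
identity.\<close>

section \<open>The Levi-Civita symbol\<close>

definition is_perm_list :: "nat \<Rightarrow> nat list \<Rightarrow> bool" where
  "is_perm_list n zs \<longleftrightarrow> length zs = n \<and> distinct zs \<and> set zs = {..<n}"

definition perm_of_list :: "nat \<Rightarrow> nat list \<Rightarrow> nat \<Rightarrow> nat" where
  "perm_of_list n zs = (\<lambda>i. if i < n then zs ! i else i)"

lemma perm_of_list_permutes:
  assumes "is_perm_list n zs" shows "perm_of_list n zs permutes {..<n}"
proof (rule bij_imp_permutes)
  have "bij_betw ((!) zs) {..<n} {..<n}"
    using assms unfolding is_perm_list_def by (intro bij_betw_nth) auto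
  then show "bij_betw (perm_of_list n zs) {..<n} {..<n}"
    by (rule bij_betw_cong[THEN iffD1, rotated]) (auto simp: perm_of_list_def)
qed (auto simp: perm_of_list_def)

lemma levi_civita_eq:
  "levi_civita n zs = (if is_perm_list n zs then of_int (sign (perm_of_list n zs)) else 0)"
  unfolding levi_civita_def is_perm_list_def perm_of_list_def by simp

lemma levi_civita_eq_0: "\<not> is_perm_list n zs \<Longrightarrow> levi_civita n zs = 0"
  by (simp add: levi_civita_eq)

lemma levi_civita_square: "is_perm_list n zs \<Longrightarrow> levi_civita n zs * levi_civita n zs = 1"
  by (simp add: levi_civita_eq sign_def)

lemma levi_civita_swap:
  assumes i: "i < length zs" and j: "j < length zs" and ij: "i \<noteq> j"
  shows "levi_civita n (zs[i := zs ! j, j := zs ! i]) = - levi_civita n zs"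
proof (cases "is_perm_list n zs")
  case True
  let ?z = "zs[i := zs ! j, j := zs ! i]"
  have perm: "is_perm_list n ?z"
    using True i j unfolding is_perm_list_def by (simp add: distinct_swap set_swap)
  have "perm_of_list n ?z = perm_of_list n zs \<circ> Transposition.transpose i j"
  proof
    fix x show "perm_of_list n ?z x = (perm_of_list n zs \<circ> Transposition.transpose i j) x"
      using True i j unfolding perm_of_list_def is_perm_list_def
      by (auto simp: nth_list_update transpose_def)
  qed
  then have "sign (perm_of_list n ?z) = - sign (perm_of_list n zs)"
    using permutes_imp_permutation[OF finite_lessThan perm_of_list_permutes[OF True]]
    by (simp add: sign_compose permutation_swap_id sign_swap_id ij)
  then show ?thesis using perm True by (simp add: levi_civita_eq)
next
  case False
  then have "\<not> is_perm_list n (zs[i := zs ! j, j := zs ! i])"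
    using i j unfolding is_perm_list_def by (simp add: distinct_swap set_swap)
  then show ?thesis using False by (simp add: levi_civita_eq_0)
qed

lemma levi_civita_swap_blocks:
  "length A = length B \<Longrightarrow>
   levi_civita n (P @ A @ C @ B @ D) = (-1) ^ length A * levi_civita n (P @ B @ C @ A @ D)"
proof (induction A B arbitrary: P C rule: list_induct2)
  case Nil then show ?case by simp
next
  case (Cons a A b B)
  have swap: "levi_civita n (P @ y # X @ C @ x # Z) = - levi_civita n (P @ x # X @ C @ y # Z)"
    for x y X Z
  proof -
    let ?zs = "P @ x # X @ C @ y # Z" and ?j = "length P + 1 + length X + length C"
    have "?zs[length P := ?zs ! ?j, ?j := ?zs ! length P] = P @ y # X @ C @ x # Z"
      by (simp add: list_update_append nth_append)
    then show ?thesis using levi_civita_swap[of "length P" ?zs ?j n] by simp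
  qed
  have "levi_civita n (P @ a # A @ C @ b # B @ D) = - levi_civita n (P @ b # A @ C @ a # B @ D)"
    using swap[where x = a and y = b and X = A and Z = "B @ D"] by simp
  also have "levi_civita n (P @ b # A @ C @ a # B @ D) =
      (-1) ^ length A * levi_civita n (P @ b # B @ C @ a # A @ D)"
    using Cons.IH[of "P @ [b]" "C @ [a]"] by simp
  finally show ?case by (simp only: append.simps length_Cons power_Suc)
qed

lemma levi_civita_append_commute:
  "length A = length B \<Longrightarrow> even (length A) \<Longrightarrow> levi_civita n (A @ B) = levi_civita n (B @ A)"
  using levi_civita_swap_blocks[of A B n "[]" "[]" "[]"] by simp

lemma is_perm_list_append_commute: "is_perm_list n (I @ Y) \<Longrightarrow> is_perm_list n (Y @ I)"
  unfolding is_perm_list_def by auto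

lemma is_perm_list_append_idx_lists:
  assumes "is_perm_list n (I @ Y)" "length I = k"
  shows "I \<in> idx_lists n k" "Y \<in> idx_lists n (n - k)" "distinct I" "distinct Y"
  using assms unfolding is_perm_list_def idx_lists_def by auto

lemma exists_complement_list:
  assumes "distinct I" "set I \<subseteq> {..<n}"
  obtains Y where "is_perm_list n (I @ Y)"
proof
  let ?Y = "filter (\<lambda>i. i \<notin> set I) [0..<n]"
  have set_Y: "set ?Y = {..<n} - set I" by auto
  have "length ?Y = card (set ?Y)" by (rule distinct_card[symmetric]) simp
  also have "\<dots> = n - length I"
    unfolding set_Y using assms by (simp add: card_Diff_subset distinct_card)
  moreover have "length I \<le> n"
    using assms card_mono[of "{..<n}" "set I"] by (simp add: distinct_card)
  ultimately show "is_perm_list n (I @ ?Y)"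
    using assms set_Y unfolding is_perm_list_def by auto
qed

section \<open>Forms\<close>

lemma idx_lists_update: "xs \<in> idx_lists n k \<Longrightarrow> c < n \<Longrightarrow> xs[i := c] \<in> idx_lists n k"
  by (auto simp: idx_lists_def dest: subsetD[OF set_update_subset_insert])

lemma form_eq_0_outside: "is_form n k w \<Longrightarrow> xs \<notin> idx_lists n k \<Longrightarrow> w xs = 0"
  unfolding is_form_def by auto

lemma form_swap:
  assumes "is_form n k w" "xs \<in> idx_lists n k" "i < k" "j < k" "i \<noteq> j"
  shows "w (xs[i := xs ! j, j := xs ! i]) = - w xs"
proof (cases "i < j")
  case True then show ?thesis using assms unfolding is_form_def by auto
next
  case False
  then have "j < i" using assms by auto
  moreover have "xs[i := xs ! j, j := xs ! i] = xs[j := xs ! i, i := xs ! j]"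
    using assms by (simp add: list_update_swap)
  ultimately show ?thesis using assms unfolding is_form_def by auto
qed

lemma form_eq_0_nondistinct:
  assumes "is_form n k w" "\<not> distinct xs"
  shows "w xs = 0"
proof (cases "xs \<in> idx_lists n k")
  case False then show ?thesis using assms form_eq_0_outside by auto
next
  case True
  then have "length xs = k" by (simp add: idx_lists_def)
  moreover obtain i j where ij: "i < length xs" "j < length xs" "i \<noteq> j" "xs ! i = xs ! j"
    using assms(2) by (auto simp: distinct_conv_nth)
  moreover have "xs[i := xs ! j, j := xs ! i] = xs" using ij by (metis list_update_id)
  ultimately show ?thesis using form_swap[OF assms(1) True, of i j] by auto
qed

lemma form_update_swap:
  assumes w: "is_form n k w" and xs: "xs \<in> idx_lists n k"
    and st: "s < k" "t < k" "s \<noteq> t" and c: "c < n"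
  shows "w (xs[s := xs ! t, t := c]) = - w (xs[s := c])"
proof -
  have len: "length xs = k" using xs by (simp add: idx_lists_def)
  have "xs[s := c] \<in> idx_lists n k" using xs c by (rule idx_lists_update)
  moreover have "(xs[s := c])[s := xs[s := c] ! t, t := xs[s := c] ! s] = xs[s := xs ! t, t := c]"
    using st len by (simp add: list_update_swap)
  ultimately show ?thesis using form_swap[OF w, of "xs[s := c]" s t] st by simp
qed

lemma form_add_scaled:
  "is_form n k f \<Longrightarrow> is_form n k g \<Longrightarrow> is_form n k (\<lambda>xs. a * f xs + b * g xs)"
  unfolding is_form_def by auto

lemma form_permute:
  assumes w: "is_form n k w" and p: "p permutes {..<k}" and xs: "xs \<in> idx_lists n k"
  shows "w (map (\<lambda>i. xs ! p i) [0..<k]) = of_int (sign p) * w xs"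
  using p finite_lessThan[of k] xs
proof (induction p arbitrary: xs rule: permutes_induct)
  case id
  then have "map (\<lambda>i. xs ! id i) [0..<k] = xs" by (auto simp: idx_lists_def intro: nth_equalityI)
  then show ?case by simp
next
  case (swap a b p)
  let ?ys = "xs[a := xs ! b, b := xs ! a]"
  have len: "length xs = k" using swap.prems by (simp add: idx_lists_def)
  have ys: "?ys \<in> idx_lists n k" using swap.prems swap(1,2) by (auto simp: idx_lists_def set_swap)
  have "map (\<lambda>i. xs ! (Transposition.transpose a b \<circ> p) i) [0..<k] = map (\<lambda>i. ?ys ! p i) [0..<k]"
    using swap(1,2) len permutes_in_image[OF swap(4)] by (auto simp: nth_list_update transpose_def)
  also have "w \<dots> = of_int (sign p) * w ?ys" using swap.IH[OF ys] .
  also have "w ?ys = - w xs" using form_swap[OF w swap.prems, of a b] swap(1,2,3) by auto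
  finally have "w (map (\<lambda>i. xs ! (Transposition.transpose a b \<circ> p) i) [0..<k]) =
      - of_int (sign p) * w xs" by simp
  moreover have "sign (Transposition.transpose a b \<circ> p) = - sign p"
    using swap(3) by (simp add: sign_compose permutation_swap_id sign_swap_id
        permutes_imp_permutation[OF _ swap(4)])
  ultimately show ?case by (simp add: o_def)
qed

lemma rearrangement_as_permutation:
  assumes I: "distinct I" "length I = k" and xs: "distinct xs" "set xs = set I"
  obtains p where "p permutes {..<k}" "xs = map (\<lambda>i. I ! p i) [0..<k]"
proof
  have len: "length xs = k" using I xs by (metis distinct_card)
  have bI: "bij_betw ((!) I) {..<k} (set I)" using I by (intro bij_betw_nth) auto
  have bx: "bij_betw ((!) xs) {..<k} (set I)" using xs len by (intro bij_betw_nth) auto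
  define p where "p = (\<lambda>i. if i < k then inv_into {..<k} ((!) I) (xs ! i) else i)"
  have "bij_betw p {..<k} {..<k}"
    using bij_betw_trans[OF bx bij_betw_inv_into[OF bI]]
    by (rule bij_betw_cong[THEN iffD1, rotated]) (auto simp: p_def)
  then show "p permutes {..<k}" by (rule bij_imp_permutes) (auto simp: p_def)
  have "I ! p i = xs ! i" if "i < k" for i
    using that xs len bI nth_mem[of i xs] by (simp add: p_def bij_betw_def f_inv_into_f)
  then show "xs = map (\<lambda>i. I ! p i) [0..<k]" using len by (auto intro: nth_equalityI)
qed

text \<open>Each rearrangement of I contributes sign p ^ 2 * w I * v I.\<close>

lemma sum_form_products_supported:
  assumes w: "is_form n k w" and v: "is_form n k v"
    and I: "distinct I" "I \<in> idx_lists n k"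
    and supp: "\<And>xs. xs \<in> idx_lists n k \<Longrightarrow> v xs \<noteq> 0 \<Longrightarrow> set xs = set I"
  shows "(\<Sum>xs\<in>idx_lists n k. w xs * v xs) = fact k * (w I * v I)"
proof -
  have len: "length I = k" and sub_n: "set I \<subseteq> {..<n}" using I by (auto simp: idx_lists_def)
  have fin: "finite (idx_lists n k)"
    unfolding idx_lists_def using finite_lists_length_eq[of "{..<n}" k] by (simp add: conj_commute)
  have sub: "permutations_of_set (set I) \<subseteq> idx_lists n k"
    using len sub_n I by (auto simp: permutations_of_set_def idx_lists_def distinct_card[symmetric])
  have "(\<Sum>xs\<in>idx_lists n k. w xs * v xs) = (\<Sum>xs\<in>permutations_of_set (set I). w xs * v xs)"
  proof (rule sum.mono_neutral_right[OF fin sub], intro ballI)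
    fix xs assume xs: "xs \<in> idx_lists n k - permutations_of_set (set I)"
    show "w xs * v xs = 0"
    proof (cases "v xs = 0")
      case False
      then have "\<not> distinct xs" using supp xs by (auto simp: permutations_of_set_def)
      then show ?thesis using form_eq_0_nondistinct[OF w] by simp
    qed simp
  qed
  also have "\<dots> = (\<Sum>xs\<in>permutations_of_set (set I). w I * v I)"
  proof (rule sum.cong[OF refl])
    fix xs assume "xs \<in> permutations_of_set (set I)"
    then obtain p where p: "p permutes {..<k}" "xs = map (\<lambda>i. I ! p i) [0..<k]"
      using rearrangement_as_permutation[OF I(1) len] by (auto simp: permutations_of_set_def)
    show "w xs * v xs = w I * v I"
      using form_permute[OF w p(1) I(2)] form_permute[OF v p(1) I(2)] p(2)
      by (simp add: sign_def)
  qed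
  also have "\<dots> = fact k * (w I * v I)" using I len by (simp add: distinct_card)
  finally show ?thesis .
qed

section \<open>Basis forms and the Hodge star\<close>

text \<open>The k-form xs \<mapsto> vol(xs, Z). If I @ Z is a permutation of [0..<n], it is
\<plusminus>e^I, with the sign levi_civita n (I @ Z).\<close>

definition vol_tail :: "nat \<Rightarrow> nat \<Rightarrow> nat list \<Rightarrow> nat list \<Rightarrow> real" where
  "vol_tail n k Z = (\<lambda>xs. if xs \<in> idx_lists n k then levi_civita n (xs @ Z) else 0)"

lemma vol_tail_form: "is_form n k (vol_tail n k Z)"
  unfolding is_form_def
proof (intro conjI allI impI)
  fix xs i j assume xs: "xs \<in> idx_lists n k" and ij: "i < j" "j < k"
  then have len: "length xs = k" by (simp add: idx_lists_def)
  have "xs[i := xs ! j, j := xs ! i] \<in> idx_lists n k"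
    using xs ij len unfolding idx_lists_def by (auto simp: set_swap)
  moreover have "(xs @ Z)[i := (xs @ Z) ! j, j := (xs @ Z) ! i] = xs[i := xs ! j, j := xs ! i] @ Z"
    using ij len by (simp add: list_update_append nth_append)
  ultimately show "vol_tail n k Z (xs[i := xs ! j, j := xs ! i]) = - vol_tail n k Z xs"
    using levi_civita_swap[of i "xs @ Z" j n] xs ij len unfolding vol_tail_def by auto
qed (auto simp: vol_tail_def)

lemma vol_tail_eq_0: "p < length L \<Longrightarrow> L ! p \<in> set Z \<Longrightarrow> vol_tail n k Z L = 0"
  by (metis disjoint_iff distinct_append is_perm_list_def levi_civita_eq_0 nth_mem vol_tail_def)

lemma sum_vol_tail:
  assumes w: "is_form n k w" and perm: "is_perm_list n (I @ Y)" and len: "length I = k"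
  shows "(\<Sum>xs\<in>idx_lists n k. w xs * vol_tail n k Y xs) = fact k * (w I * levi_civita n (I @ Y))"
proof -
  note I = is_perm_list_append_idx_lists[OF perm len]
  have "(\<Sum>xs\<in>idx_lists n k. w xs * vol_tail n k Y xs) = fact k * (w I * vol_tail n k Y I)"
  proof (rule sum_form_products_supported[OF w vol_tail_form I(3,1)])
    fix xs assume "xs \<in> idx_lists n k" "vol_tail n k Y xs \<noteq> 0"
    then have "is_perm_list n (xs @ Y)" by (auto simp: vol_tail_def levi_civita_eq split: if_splits)
    then show "set xs = set I" using perm unfolding is_perm_list_def by auto
  qed
  then show ?thesis using I by (simp add: vol_tail_def)
qed

lemma hodge_at_complement:
  assumes "is_form n k w" "is_perm_list n (I @ Y)" "length I = k"
  shows "hodge n k w Y = levi_civita n (I @ Y) * w I"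
  using sum_vol_tail[OF assms] is_perm_list_append_idx_lists[OF assms(2,3)]
  by (simp add: hodge_def vol_tail_def)

lemma hodge_vol_tail:
  assumes n: "n = 2 * k" "even k" and perm: "is_perm_list n (I @ Y)" and len: "length I = k"
  shows "hodge n k (vol_tail n k Y) = (\<lambda>ys. levi_civita n (I @ Y) * vol_tail n k I ys)"
proof
  fix ys
  have nk: "n - k = k" using n by simp
  show "hodge n k (vol_tail n k Y) ys = levi_civita n (I @ Y) * vol_tail n k I ys"
  proof (cases "ys \<in> idx_lists n k")
    case False then show ?thesis by (simp add: hodge_def nk vol_tail_def)
  next
    case True
    then have "length ys = k" by (simp add: idx_lists_def)
    then have "vol_tail n k ys I = vol_tail n k I ys"
      using True len n is_perm_list_append_idx_lists[OF perm len]
      by (simp add: vol_tail_def levi_civita_append_commute)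
    moreover have "(\<Sum>xs\<in>idx_lists n k. vol_tail n k Y xs * levi_civita n (xs @ ys)) =
          (\<Sum>xs\<in>idx_lists n k. vol_tail n k ys xs * vol_tail n k Y xs)"
      by (rule sum.cong) (auto simp: vol_tail_def)
    ultimately show ?thesis
      using True sum_vol_tail[OF vol_tail_form perm len] by (simp add: hodge_def nk)
  qed
qed

lemma hodge_add_scaled:
  "hodge n k (\<lambda>xs. a * f xs + b * g xs) = (\<lambda>ys. a * hodge n k f ys + b * hodge n k g ys)"
  unfolding hodge_def by (auto simp: algebra_simps sum.distrib sum_distrib_left add_divide_distrib)

text \<open>For complementary I and Y this is e^I + eps *e^I (the first summand is e^I exactly).\<close>

definition hodge_eigenform ::
    "nat \<Rightarrow> nat \<Rightarrow> real \<Rightarrow> nat list \<Rightarrow> nat list \<Rightarrow> nat list \<Rightarrow> real" where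
  "hodge_eigenform n k eps I Y =
     (\<lambda>xs. levi_civita n (I @ Y) * vol_tail n k Y xs + eps * vol_tail n k I xs)"

lemma hodge_eigenform_form: "is_form n k (hodge_eigenform n k eps I Y)"
  unfolding hodge_eigenform_def by (intro form_add_scaled vol_tail_form)

lemma hodge_hodge_eigenform:
  assumes n: "n = 2 * k" "even k" and eps: "eps * eps = 1"
    and perm: "is_perm_list n (I @ Y)" and len: "length I = k"
  shows "hodge n k (hodge_eigenform n k eps I Y) = (\<lambda>xs. eps * hodge_eigenform n k eps I Y xs)"
proof -
  have lenY: "length Y = k" using perm len n by (simp add: is_perm_list_def)
  have "levi_civita n (Y @ I) = levi_civita n (I @ Y)"
    using len lenY n by (simp add: levi_civita_append_commute)
  then show ?thesis
    using hodge_vol_tail[OF n perm len] hodge_vol_tail[OF n is_perm_list_append_commute[OF perm] lenY]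
      levi_civita_square[OF perm] eps
    unfolding hodge_eigenform_def hodge_add_scaled by (auto simp: fun_eq_iff algebra_simps)
qed

lemma form_inner_hodge_eigenform:
  assumes n: "n = 2 * k" "even k" and eps: "eps * eps = 1"
    and u: "is_form n k u" and u_sd: "hodge n k u = (\<lambda>xs. eps * u xs)"
    and perm: "is_perm_list n (I @ Y)" and len: "length I = k"
  shows "form_inner n k u (hodge_eigenform n k eps I Y) = 2 * u I"
proof -
  let ?s = "levi_civita n (I @ Y)"
  have ss: "?s * ?s = 1" using levi_civita_square[OF perm] .
  have lenY: "length Y = k" using perm len n by (simp add: is_perm_list_def)
  have sY: "levi_civita n (Y @ I) = ?s"
    using len lenY n by (simp add: levi_civita_append_commute)
  have uY: "eps * u Y = ?s * u I"
    using hodge_at_complement[OF u perm len] u_sd by (simp add: fun_eq_iff)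
  have "form_inner n k u (hodge_eigenform n k eps I Y) =
      (?s * (\<Sum>xs\<in>idx_lists n k. u xs * vol_tail n k Y xs) +
       eps * (\<Sum>xs\<in>idx_lists n k. u xs * vol_tail n k I xs)) / fact k"
    unfolding form_inner_def hodge_eigenform_def
    by (simp add: algebra_simps sum.distrib sum_distrib_left)
  also have "\<dots> = ?s * (u I * ?s) + ?s * (eps * u Y)"
    using sum_vol_tail[OF u perm len] sum_vol_tail[OF u is_perm_list_append_commute[OF perm] lenY]
    by (simp add: sY field_simps)
  also have "\<dots> = 2 * u I" using uY ss by (simp add: algebra_simps)
  finally show ?thesis .
qed

section \<open>The Weitzenboeck curvature\<close>

lemma weitz_eq_0_local:
  assumes "\<And>s b. s < k \<Longrightarrow> b < n \<Longrightarrow> f (J[s := b]) = 0"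
    and "\<And>s t b c. s < t \<Longrightarrow> t < k \<Longrightarrow> b < n \<Longrightarrow> c < n \<Longrightarrow> f (J[s := b, t := c]) = 0"
  shows "weitz n X k f J = 0"
  unfolding weitz_def using assms by simp

lemma weitz_add_scaled:
  "weitz n X k (\<lambda>xs. f xs + a * g xs) J = weitz n X k f J + a * weitz n X k g J"
  unfolding weitz_def by (simp add: algebra_simps sum.distrib sum_distrib_left)

lemma ricci_add_scaled:
  "ricci n (\<lambda>a b c d. A a b c d + m * B a b c d) x y = ricci n A x y + m * ricci n B x y"
  unfolding ricci_def by (simp add: sum.distrib sum_distrib_left)

lemma weitz_add_scaled_curvature:
  "weitz n (\<lambda>a b c d. A a b c d + m * B a b c d) k f J = weitz n A k f J + m * weitz n B k f J"
  unfolding weitz_def ricci_add_scaled by (simp add: algebra_simps sum.distrib sum_distrib_left)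

text \<open>Three slots of J hold indices of I, and the curvature terms change at most two slots,
so vol(\<cdot>, I) vanishes on every multi-index they produce.\<close>

lemma weitz_vol_tail_eq_0:
  assumes J: "length J = k" "k \<ge> 4" "J ! 1 \<in> set I" "J ! 2 \<in> set I" "J ! 3 \<in> set I"
  shows "weitz n X k (vol_tail n k I) J = 0"
proof -
  have free_slot: "\<exists>p\<in>{1, 2, 3}. p \<noteq> s \<and> p \<noteq> t" for s t :: nat
    by (cases "s = 1"; cases "t = 1"; cases "s = 2"; cases "t = 2") auto
  have two: "vol_tail n k I (J[s := b, t := c]) = 0" for s t b c
  proof -
    obtain p where "p \<in> {1, 2, 3}" "p \<noteq> s" "p \<noteq> t" using free_slot by blast
    then show ?thesis using J by (intro vol_tail_eq_0[of p]) auto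
  qed
  moreover have "vol_tail n k I (J[s := b]) = 0" for s b using two[of s b s b] by simp
  ultimately show ?thesis by (intro weitz_eq_0_local)
qed

lemma kron_sum_left: "a < n \<Longrightarrow> (\<Sum>b<n. kron b a * G b) = G a"
  unfolding kron_def by (simp add: if_distrib[of "\<lambda>x. x * _"] sum.delta' cong: if_cong)

lemma kron_sum_right: "a < n \<Longrightarrow> (\<Sum>b<n. kron a b * G b) = G a"
  unfolding kron_def by (simp add: if_distrib[of "\<lambda>x. x * _"] sum.delta cong: if_cong)

lemma kron_self [simp]: "kron c c = 1"
  by (simp add: kron_def)

lemma ricci_kn_prod_kron:
  assumes "a < n" "b < n"
  shows "ricci n (kn_prod h kron) a b = (\<Sum>c<n. h c c) * kron a b + (real n - 2) * h a b"
proof -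
  have "ricci n (kn_prod h kron) a b =
     (\<Sum>c<n. h c c * kron a b) + (\<Sum>c<n. h a b * kron c c) - (\<Sum>c<n. kron a c * h c b)
       - (\<Sum>c<n. kron c b * h a c)"
    unfolding ricci_def kn_prod_def by (simp add: sum.distrib sum_subtractf algebra_simps)
  also have "\<dots> = (\<Sum>c<n. h c c) * kron a b + real n * h a b - h a b - h a b"
    using assms by (simp add: kron_sum_left kron_sum_right sum_distrib_right[symmetric])
  finally show ?thesis by (simp add: algebra_simps)
qed

lemma sum_pairs: "(\<Sum>s<k. \<Sum>t\<in>{s<..<k}. g s + g t) = (real k - 1) * (\<Sum>s<k. g s :: real)"
proof (induction k)
  case 0 then show ?case by simp
next
  case (Suc k)
  have split: "{s<..<Suc k} = insert k {s<..<k}" if "s < k" for s using that by auto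
  have "{k<..<Suc k} = {}" by auto
  then have "(\<Sum>s<Suc k. \<Sum>t\<in>{s<..<Suc k}. g s + g t) = (\<Sum>s<k. \<Sum>t\<in>{s<..<Suc k}. g s + g t)"
    by simp
  also have "\<dots> = (\<Sum>s<k. (\<Sum>t\<in>{s<..<k}. g s + g t) + (g s + g k))"
    by (intro sum.cong refl) (simp add: split)
  also have "\<dots> = (real k - 1) * (\<Sum>s<k. g s) + (\<Sum>s<k. g s) + real k * g k"
    using Suc by (simp add: sum.distrib)
  finally show ?case by (simp add: algebra_simps)
qed

definition slot_action ::
    "nat \<Rightarrow> (nat \<Rightarrow> nat \<Rightarrow> real) \<Rightarrow> (nat list \<Rightarrow> real) \<Rightarrow> nat list \<Rightarrow> nat \<Rightarrow> real" where
  "slot_action n h f J s = (\<Sum>b<n. h (J ! s) b * f (J[s := b]))"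

context
  fixes n k :: nat and h :: "nat \<Rightarrow> nat \<Rightarrow> real" and f :: "nat list \<Rightarrow> real" and J :: "nat list"
  assumes f: "is_form n k f" and J: "J \<in> idx_lists n k" "distinct J"
begin

private lemma length_J: "length J = k"
  using J by (simp add: idx_lists_def)

private lemma J_less:
  assumes "s < k" shows "J ! s < n"
proof -
  have "J ! s \<in> set J" using assms length_J by simp
  then show ?thesis using J by (auto simp: idx_lists_def)
qed

private lemma ricci_term:
  "(\<Sum>s<k. \<Sum>b<n. ricci n (kn_prod h kron) (J ! s) b * f (J[s := b])) =
     real k * (\<Sum>c<n. h c c) * f J + (real n - 2) * (\<Sum>s<k. slot_action n h f J s)"
proof -
  have "(\<Sum>b<n. ricci n (kn_prod h kron) (J ! s) b * f (J[s := b])) =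
        (\<Sum>c<n. h c c) * f J + (real n - 2) * slot_action n h f J s" if "s < k" for s
  proof -
    have "(\<Sum>b<n. ricci n (kn_prod h kron) (J ! s) b * f (J[s := b])) =
          (\<Sum>b<n. kron (J ! s) b * ((\<Sum>c<n. h c c) * f (J[s := b])) +
                  (real n - 2) * (h (J ! s) b * f (J[s := b])))"
      using J_less that by (intro sum.cong) (auto simp: ricci_kn_prod_kron algebra_simps)
    then show ?thesis
      using J_less that
      by (simp add: sum.distrib kron_sum_right slot_action_def sum_distrib_left)
  qed
  then show ?thesis by (simp add: sum.distrib sum_distrib_left)
qed

private lemma pair_term:
  assumes sym: "\<And>a b. a < n \<Longrightarrow> b < n \<Longrightarrow> h a b = h b a" and st: "s < t" "t < k"
  shows "(\<Sum>b<n. \<Sum>c<n. kn_prod h kron (J ! s) b (J ! t) c * f (J[s := b, t := c])) =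
           slot_action n h f J s + slot_action n h f J t"
proof -
  let ?x = "J ! s" and ?y = "J ! t"
  have xy: "?x < n" "?y < n" "?x \<noteq> ?y"
    using J_less st J(2) length_J by (auto simp: nth_eq_iff_index_eq)
  have diagonal: "(\<Sum>b<n. \<Sum>c<n. kron b c * (h ?x ?y * f (J[s := b, t := c]))) = 0"
  proof -
    have "\<not> distinct (J[s := b, t := b])" for b
      using st length_J by (auto simp: distinct_conv_nth nth_list_update)
    then show ?thesis by (simp add: kron_sum_right form_eq_0_nondistinct[OF f])
  qed
  have swap_s: "f (J[s := ?y, t := c]) = - f (J[s := c])" if "c < n" for c
    using st that by (intro form_update_swap[OF f J(1)]) auto
  have swap_t: "f (J[s := b, t := ?x]) = - f (J[t := b])" if "b < n" for b
    using form_update_swap[OF f J(1), of t s b] st that by (simp add: list_update_swap)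
  have "(\<Sum>b<n. kron b ?y * (\<Sum>c<n. h ?x c * f (J[s := b, t := c]))) =
      (\<Sum>c<n. h ?x c * f (J[s := ?y, t := c]))"
    using xy by (simp add: kron_sum_left)
  also have "\<dots> = - slot_action n h f J s"
    unfolding slot_action_def sum_negf[symmetric] by (intro sum.cong refl) (simp add: swap_s)
  finally have first:
    "(\<Sum>b<n. kron b ?y * (\<Sum>c<n. h ?x c * f (J[s := b, t := c]))) = - slot_action n h f J s" .
  have "(\<Sum>b<n. \<Sum>c<n. kron ?x c * (h b ?y * f (J[s := b, t := c]))) =
      (\<Sum>b<n. h b ?y * f (J[s := b, t := ?x]))"
    using xy by (simp add: kron_sum_right)
  also have "\<dots> = - slot_action n h f J t"
    unfolding slot_action_def sum_negf[symmetric] using xy sym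
    by (intro sum.cong refl) (simp add: swap_t)
  finally have second:
    "(\<Sum>b<n. \<Sum>c<n. kron ?x c * (h b ?y * f (J[s := b, t := c]))) = - slot_action n h f J t" .
  have "(\<Sum>b<n. \<Sum>c<n. kn_prod h kron ?x b ?y c * f (J[s := b, t := c])) =
        (\<Sum>b<n. \<Sum>c<n. kron b c * (h ?x ?y * f (J[s := b, t := c])))
        + (\<Sum>b<n. \<Sum>c<n. kron ?x ?y * (h b c * f (J[s := b, t := c])))
        - (\<Sum>b<n. kron b ?y * (\<Sum>c<n. h ?x c * f (J[s := b, t := c])))
        - (\<Sum>b<n. \<Sum>c<n. kron ?x c * (h b ?y * f (J[s := b, t := c])))"
    unfolding kn_prod_def by (simp add: sum.distrib sum_subtractf algebra_simps sum_distrib_left)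
  then show ?thesis using diagonal first second xy by (simp add: kron_def)
qed

lemma weitz_kn_prod_kron:
  assumes "\<And>a b. a < n \<Longrightarrow> b < n \<Longrightarrow> h a b = h b a"
  shows "weitz n (kn_prod h kron) k f J =
           real k * (\<Sum>c<n. h c c) * f J + (real n - 2 * real k) * (\<Sum>s<k. slot_action n h f J s)"
proof -
  have "(\<Sum>s<k. \<Sum>t\<in>{s<..<k}. \<Sum>b<n. \<Sum>c<n.
            kn_prod h kron (J ! s) b (J ! t) c * f (J[s := b, t := c]))
        = (real k - 1) * (\<Sum>s<k. slot_action n h f J s)"
    by (subst sum_pairs[symmetric], intro sum.cong refl) (auto simp: pair_term[OF assms])
  then show ?thesis using J(1) unfolding weitz_def ricci_term by (simp add: algebra_simps)
qed

end

lemma weitz_kn_prod_kron_middle: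
  assumes "is_form n k f" "J \<in> idx_lists n k" "distinct J" "n = 2 * k"
    and "\<And>a b. a < n \<Longrightarrow> b < n \<Longrightarrow> h a b = h b a"
  shows "weitz n (kn_prod h kron) k f J = real k * (\<Sum>c<n. h c c) * f J"
  using weitz_kn_prod_kron[OF assms(1-3,5)] assms(4) by simp

text \<open>The Weyl tensor is R minus (1/(n-2)) times this tensor owedge g.\<close>

definition scaled_schouten ::
    "nat \<Rightarrow> (nat \<Rightarrow> nat \<Rightarrow> nat \<Rightarrow> nat \<Rightarrow> real) \<Rightarrow> nat \<Rightarrow> nat \<Rightarrow> real" where
  "scaled_schouten n R = (\<lambda>i j. ricci n R i j - scal n R / (2 * (real n - 1)) * kron i j)"

definition weitz_scalar ::
    "nat \<Rightarrow> (nat \<Rightarrow> nat \<Rightarrow> nat \<Rightarrow> nat \<Rightarrow> real) \<Rightarrow> nat \<Rightarrow> real" where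
  "weitz_scalar n R k = real k * (\<Sum>c<n. scaled_schouten n R c c) / (real n - 2)"

lemma scaled_schouten_sym:
  assumes "algebraic_curvature_tensor n R" "a < n" "b < n"
  shows "scaled_schouten n R a b = scaled_schouten n R b a"
proof -
  have "R c a c b = R c b c a" if "c < n" for c
    using assms that unfolding algebraic_curvature_tensor_def by blast
  then have "ricci n R a b = ricci n R b a"
    unfolding ricci_def by (intro sum.cong) auto
  then show ?thesis unfolding scaled_schouten_def kron_def by auto
qed

lemma weitz_middle_weyl_decomposition:
  assumes curv: "algebraic_curvature_tensor n R" and n: "n = 2 * k" "k \<ge> 2"
    and f: "is_form n k f" and J: "J \<in> idx_lists n k" "distinct J"
  shows "weitz n R k f J = weitz n (weyl n R) k f J + weitz_scalar n R k * f J"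
proof -
  let ?S = "kn_prod (scaled_schouten n R) kron"
  have "R = (\<lambda>a b c d. weyl n R a b c d + (1 / (real n - 2)) * ?S a b c d)"
    using n unfolding weyl_def scaled_schouten_def by (auto simp: fun_eq_iff)
  then have "weitz n R k f J = weitz n (\<lambda>a b c d. weyl n R a b c d + (1 / (real n - 2)) * ?S a b c d) k f J"
    by (rule arg_cong)
  also have "\<dots> = weitz n (weyl n R) k f J + (1 / (real n - 2)) * weitz n ?S k f J"
    by (rule weitz_add_scaled_curvature)
  finally show ?thesis
    using weitz_kn_prod_kron_middle[OF f J n(1) scaled_schouten_sym[OF curv]]
    by (simp add: weitz_scalar_def)
qed

section \<open>Middle degree at least four\<close>

locale rank_one_weitzenboeck =
  fixes n k :: nat and R :: "nat \<Rightarrow> nat \<Rightarrow> nat \<Rightarrow> nat \<Rightarrow> real"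
    and eps lam :: real and u :: "nat list \<Rightarrow> real"
  assumes dim: "n = 2 * k" and even_k: "even k" and k_ge_4: "k \<ge> 4"
    and curv: "algebraic_curvature_tensor n R"
    and eps: "eps = 1 \<or> eps = -1"
    and weyl_vanish: "\<forall>\<xi>. is_form n k \<xi> \<and> hodge n k \<xi> = (\<lambda>xs. - eps * \<xi> xs)
                         \<longrightarrow> weyl_op n R k \<xi> = (\<lambda>_. 0)"
    and u_form: "is_form n k u"
    and u_sd: "hodge n k u = (\<lambda>xs. eps * u xs)"
    and R_eq: "\<forall>\<xi>. is_form n k \<xi> \<and> hodge n k \<xi> = (\<lambda>xs. eps * \<xi> xs)
                 \<longrightarrow> weitz n R k \<xi> = (\<lambda>xs. lam * \<xi> xs - form_inner n k u \<xi> * u xs)"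
begin

lemma eps_square: "eps * eps = 1" and minus_eps_square: "- eps * - eps = 1"
  using eps by auto

context
  fixes I Y J :: "nat list"
  assumes perm: "is_perm_list n (I @ Y)" and len: "length I = k"
    and J: "J \<in> idx_lists n k" "distinct J" "J ! 1 \<in> set I" "J ! 2 \<in> set I" "J ! 3 \<in> set I"
begin

private lemma vol_tail_I_invisible: "weitz n X k (vol_tail n k I) J = 0"
  using J k_ge_4 by (intro weitz_vol_tail_eq_0) (auto simp: idx_lists_def)

private lemma weitz_hodge_eigenform:
  "weitz n X k (hodge_eigenform n k c I Y) J =
     levi_civita n (I @ Y) * weitz n X k (vol_tail n k Y) J"
proof -
  have "weitz n X k (hodge_eigenform n k c I Y) J =
        weitz n X k (\<lambda>xs. levi_civita n (I @ Y) * vol_tail n k Y xs) J"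
    unfolding hodge_eigenform_def weitz_add_scaled vol_tail_I_invisible by simp
  then show ?thesis unfolding weitz_def by (simp add: sum_distrib_left algebra_simps)
qed

private lemma weyl_vol_tail_eq_0: "weitz n (weyl n R) k (vol_tail n k Y) J = 0"
proof -
  have "weyl_op n R k (hodge_eigenform n k (- eps) I Y) = (\<lambda>_. 0)"
    using weyl_vanish hodge_eigenform_form
      hodge_hodge_eigenform[OF dim even_k minus_eps_square perm len] by simp
  then have "weitz n (weyl n R) k (hodge_eigenform n k (- eps) I Y) J = 0"
    unfolding weyl_op_def by (rule fun_cong)
  then have "levi_civita n (I @ Y) * weitz n (weyl n R) k (vol_tail n k Y) J = 0"
    by (simp only: weitz_hodge_eigenform)
  then show ?thesis using levi_civita_square[OF perm] by auto
qed

lemma eigen_equation_near_I: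
  "lam * hodge_eigenform n k eps I Y J - 2 * u I * u J =
     weitz_scalar n R k * (levi_civita n (I @ Y) * vol_tail n k Y J)"
proof -
  have "weitz n R k (hodge_eigenform n k eps I Y) J =
        lam * hodge_eigenform n k eps I Y J - 2 * u I * u J"
    using R_eq hodge_eigenform_form hodge_hodge_eigenform[OF dim even_k eps_square perm len]
      form_inner_hodge_eigenform[OF dim even_k eps_square u_form u_sd perm len] by simp
  moreover have "weitz n R k (vol_tail n k Y) J = weitz_scalar n R k * vol_tail n k Y J"
    using weitz_middle_weyl_decomposition[OF curv dim _ vol_tail_form J(1,2)] weyl_vol_tail_eq_0
      k_ge_4 by simp
  ultimately show ?thesis using weitz_hodge_eigenform by (simp add: mult.left_commute)
qed

end

context
  fixes I Y :: "nat list"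
  assumes perm: "is_perm_list n (I @ Y)" and len: "length I = k"
begin

private lemma I: "I \<in> idx_lists n k" "distinct I"
  using is_perm_list_append_idx_lists[OF perm len] by auto

private lemma I_123: "I ! 1 \<in> set I" "I ! 2 \<in> set I" "I ! 3 \<in> set I"
  using len k_ge_4 by auto

lemma coefficient_square:
  "2 * (u I * u I) = lam - weitz_scalar n R k"
proof -
  have "vol_tail n k I I = 0" using len k_ge_4 by (intro vol_tail_eq_0[of 0]) auto
  moreover have "vol_tail n k Y I = levi_civita n (I @ Y)" using I by (simp add: vol_tail_def)
  ultimately show ?thesis
    using eigen_equation_near_I[OF perm len I I_123] levi_civita_square[OF perm]
    by (simp add: hodge_eigenform_def algebra_simps)
qed

lemma coefficient_product_eq_0:
  assumes b: "b < n" "b \<notin> set I"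
  shows "u I * u (I[0 := b]) = 0"
proof -
  let ?J = "I[0 := b]"
  have J: "?J \<in> idx_lists n k" "distinct ?J"
    using I b by (auto intro: idx_lists_update distinct_list_update)
  have J_123: "?J ! 1 \<in> set I" "?J ! 2 \<in> set I" "?J ! 3 \<in> set I" using I_123 by auto
  have "vol_tail n k I ?J = 0" using J_123 len k_ge_4 by (intro vol_tail_eq_0[of 1]) auto
  moreover have "vol_tail n k Y ?J = 0"
    using perm b len k_ge_4 by (intro vol_tail_eq_0[of 0]) (auto simp: is_perm_list_def)
  ultimately show ?thesis
    using eigen_equation_near_I[OF perm len J J_123] by (simp add: hodge_eigenform_def)
qed

end

lemma form_eq_0: "u = (\<lambda>_. 0)"
proof (rule ccontr)
  assume "u \<noteq> (\<lambda>_. 0)"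
  then obtain I where uI: "u I \<noteq> 0" by auto
  have I: "I \<in> idx_lists n k" "distinct I"
    using uI form_eq_0_outside[OF u_form] form_eq_0_nondistinct[OF u_form] by blast+
  then have len: "length I = k" and set_I: "set I \<subseteq> {..<n}" by (auto simp: idx_lists_def)
  have "\<not> {..<n} \<subseteq> set I"
  proof
    assume "{..<n} \<subseteq> set I"
    then have "card {..<n} \<le> card (set I)" by (intro card_mono) auto
    then show False using I len dim k_ge_4 by (simp add: distinct_card)
  qed
  then obtain b where b: "b < n" "b \<notin> set I" by auto
  let ?J = "I[0 := b]"
  have J: "?J \<in> idx_lists n k" "distinct ?J"
    using I b by (auto intro: idx_lists_update distinct_list_update)
  obtain Y where Y: "is_perm_list n (I @ Y)" using exists_complement_list I(2) set_I .
  obtain Z where Z: "is_perm_list n (?J @ Z)"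
    using exists_complement_list J(2) J(1) by (auto simp: idx_lists_def)
  have "u I * u I = u ?J * u ?J"
    using coefficient_square[OF Y len] coefficient_square[OF Z] len by simp
  then have "(u I * u I) * (u I * u I) = (u I * u ?J) * (u I * u ?J)" by (simp add: ac_simps)
  also have "\<dots> = 0" using coefficient_product_eq_0[OF Y len b] by simp
  finally show False using uI by simp
qed

end

section \<open>Dimension four\<close>

lemma lessThan_4: "{..<4::nat} = {0, 1, 2, 3}"
  by auto

lemma levi_civita_dim4:
  "levi_civita 4 [0,1,2,3] = 1" "levi_civita 4 [0,2,1,3] = -1" "levi_civita 4 [0,3,1,2] = 1"
proof -
  have "perm_of_list 4 [0,1,2,3] = id"
  proof
    fix i show "perm_of_list 4 [0,1,2,3] i = id i"
      by (cases "i < 4") (auto simp: perm_of_list_def less_Suc_eq numeral_eq_Suc)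
  qed
  moreover have "is_perm_list 4 [0,1,2,3]" by (simp add: is_perm_list_def lessThan_4)
  ultimately show id: "levi_civita 4 [0,1,2,3] = 1" by (simp add: levi_civita_eq)
  show "levi_civita 4 [0,2,1,3] = -1" using levi_civita_swap[of 1 "[0,1,2,3::nat]" 2 4] id by simp
  have "levi_civita 4 [0,3,2,1] = -1" using levi_civita_swap[of 1 "[0,1,2,3::nat]" 3 4] id by simp
  then show "levi_civita 4 [0,3,1,2] = 1" using levi_civita_swap[of 2 "[0,3,2,1::nat]" 3 4] by simp
qed

lemma self_dual_2form_dim4:
  assumes u: "is_form 4 2 u" and eps: "eps * eps = 1" and u_sd: "hodge 4 2 u = (\<lambda>xs. eps * u xs)"
  shows "u [2,3] = eps * u [0,1]" "u [1,3] = - eps * u [0,2]" "u [1,2] = eps * u [0,3]"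
proof -
  have coeff: "eps * u Y = levi_civita 4 (I @ Y) * u I"
    if "is_perm_list 4 (I @ Y)" "length I = 2" for I Y
    using hodge_at_complement[OF u that] u_sd by (simp add: fun_eq_iff)
  have solve: "a = eps * b" if "eps * a = b" for a b
  proof -
    have "a = (eps * eps) * a" using eps by simp
    also have "\<dots> = eps * b" using that by (simp add: mult.assoc)
    finally show ?thesis .
  qed
  have "eps * u [2,3] = levi_civita 4 ([0,1] @ [2,3]) * u [0,1]"
    "eps * u [1,3] = levi_civita 4 ([0,2] @ [1,3]) * u [0,2]"
    "eps * u [1,2] = levi_civita 4 ([0,3] @ [1,2]) * u [0,3]"
    by (rule coeff; simp add: is_perm_list_def lessThan_4 insert_commute)+
  then show "u [2,3] = eps * u [0,1]" "u [1,3] = - eps * u [0,2]" "u [1,2] = eps * u [0,3]"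
    unfolding append_Cons append_Nil levi_civita_dim4 by (auto dest!: solve)
qed

lemma all_less_4: "(\<forall>a<(4::nat). P a) \<longleftrightarrow> P 0 \<and> P 1 \<and> P 2 \<and> P 3"
  by (auto simp: less_Suc_eq numeral_eq_Suc)

lemma sum_less_4: "(\<Sum>a<(4::nat). f a) = f 0 + f 1 + f 2 + (f 3 :: real)"
  by (simp add: numeral_eq_Suc)

text \<open>With p = u[0,1], q = u[0,2], r = u[0,3], the skew matrix A b a = u [a, b] satisfies
A^2 = -(p^2 + q^2 + r^2) Id and A^T A = (p^2 + q^2 + r^2) Id.\<close>

lemma self_dual_skew_matrix_complex_structure:
  fixes u :: "nat list \<Rightarrow> real"
  assumes skew: "\<And>a b. a < 4 \<Longrightarrow> b < 4 \<Longrightarrow> u [b, a] = - u [a, b]"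
    and eps: "eps = 1 \<or> eps = -1"
    and sd: "u [2,3] = eps * u [0,1]" "u [1,3] = - eps * u [0,2]" "u [1,2] = eps * u [0,3]"
    and nz: "\<exists>a<4. \<exists>b<4. u [a, b] \<noteq> 0"
  shows "\<exists>J c. orth_complex_structure 4 J \<and> (\<forall>a<4. \<forall>b<4. u [a, b] = c * J b a)"
proof -
  define p q r where "p = u [0,1]" and "q = u [0,2]" and "r = u [0,3]"
  have tab: "u [0,0] = 0" "u [0,1] = p" "u [0,2] = q" "u [0,3] = r"
    "u [1,0] = - p" "u [1,1] = 0" "u [1,2] = eps * r" "u [1,3] = - eps * q"
    "u [2,0] = - q" "u [2,1] = - (eps * r)" "u [2,2] = 0" "u [2,3] = eps * p"
    "u [3,0] = - r" "u [3,1] = eps * q" "u [3,2] = - (eps * p)" "u [3,3] = 0"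
    using sd skew[of 0 1] skew[of 0 2] skew[of 0 3] skew[of 1 2] skew[of 1 3] skew[of 2 3]
      skew[of 0 0] skew[of 1 1] skew[of 2 2] skew[of 3 3]
    unfolding p_def q_def r_def by simp_all
  define c where "c = sqrt (p * p + q * q + r * r)"
  have c2: "c * c = p * p + q * q + r * r" unfolding c_def by simp
  have "c \<noteq> 0"
  proof
    assume "c = 0"
    then have "p = 0" "q = 0" "r = 0" using c2 by (auto simp: add_nonneg_eq_0_iff)
    then have "\<forall>a<4. \<forall>b<4. u [a, b] = 0" unfolding all_less_4 by (simp only: tab) simp
    then show False using nz by blast
  qed
  define J where "J = (\<lambda>i j. u [j, i] / c)"
  have square: "\<forall>a<4. \<forall>b<4. (\<Sum>x<4. u [x, a] * u [b, x]) = - (c * c) * kron a b"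
    unfolding all_less_4 sum_less_4 kron_def c2
    by (simp only: tab) (use eps in \<open>auto simp: algebra_simps\<close>)
  have gram: "\<forall>a<4. \<forall>b<4. (\<Sum>x<4. u [a, x] * u [b, x]) = (c * c) * kron a b"
    unfolding all_less_4 sum_less_4 kron_def c2
    by (simp only: tab) (use eps in \<open>auto simp: algebra_simps\<close>)
  have "orth_complex_structure 4 J"
    unfolding orth_complex_structure_def J_def
    using square gram \<open>c \<noteq> 0\<close> by (simp add: sum_divide_distrib[symmetric])
  moreover have "\<forall>a<4. \<forall>b<4. u [a, b] = c * J b a" using \<open>c \<noteq> 0\<close> by (simp add: J_def)
  ultimately show ?thesis by blast
qed

lemma self_dual_2form_complex_structure_dim4:
  assumes u: "is_form 4 2 u" and u_nz: "u \<noteq> (\<lambda>_. 0)" and eps: "eps = 1 \<or> eps = -1"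
    and u_sd: "hodge 4 2 u = (\<lambda>xs. eps * u xs)"
  shows "\<exists>J c. orth_complex_structure 4 J \<and> (\<forall>a<4. \<forall>b<4. u [a, b] = c * J b a)"
proof (rule self_dual_skew_matrix_complex_structure[OF _ eps])
  have skew: "u [b, a] = - u [a, b]" for a b
  proof (cases "a = b")
    case True then show ?thesis using form_eq_0_nondistinct[OF u] by simp
  next
    case False
    then have "[a, b] \<notin> idx_lists 4 2 \<or> u [b, a] = - u [a, b]"
      using form_swap[OF u, of "[a, b]" 0 1] by auto
    then show ?thesis using form_eq_0_outside[OF u] by (auto simp: idx_lists_def)
  qed
  then show "\<And>a b. a < 4 \<Longrightarrow> b < 4 \<Longrightarrow> u [b, a] = - u [a, b]" .
  have eps_sq: "eps * eps = 1" using eps by auto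
  from self_dual_2form_dim4[OF u eps_sq u_sd]
  show "u [2,3] = eps * u [0,1]" "u [1,3] = - eps * u [0,2]" "u [1,2] = eps * u [0,3]" .
  obtain xs where "u xs \<noteq> 0" using u_nz by auto
  moreover have "xs \<in> idx_lists 4 2" using calculation form_eq_0_outside[OF u] by blast
  ultimately obtain a b where "a < 4" "b < 4" "u [a, b] \<noteq> 0"
    by (auto simp: idx_lists_def numeral_2_eq_2 length_Suc_conv)
  then show "\<exists>a<4. \<exists>b<4. u [a, b] \<noteq> 0" by blast
qed

theorem proposition3p6:
  fixes n :: nat and R :: "nat \<Rightarrow> nat \<Rightarrow> nat \<Rightarrow> nat \<Rightarrow> real"
    and u :: "nat list \<Rightarrow> real" and eps lam :: real
  assumes n_pos: "0 < n" and n_half_even: "4 dvd n"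
    and curv: "algebraic_curvature_tensor n R"
    and eps: "eps = 1 \<or> eps = -1"
    and weyl_vanish: "\<forall>\<xi>. is_form n (n div 2) \<xi> \<and> hodge n (n div 2) \<xi> = (\<lambda>xs. - eps * \<xi> xs)
                         \<longrightarrow> weyl_op n R (n div 2) \<xi> = (\<lambda>_. 0)"
    and u_form: "is_form n (n div 2) u" and u_nz: "u \<noteq> (\<lambda>_. 0)"
    and u_sd: "hodge n (n div 2) u = (\<lambda>xs. eps * u xs)"
    and R_eq: "\<forall>\<xi>. is_form n (n div 2) \<xi> \<and> hodge n (n div 2) \<xi> = (\<lambda>xs. eps * \<xi> xs)
                 \<longrightarrow> weitz n R (n div 2) \<xi> =
                       (\<lambda>xs. lam * \<xi> xs - form_inner n (n div 2) u \<xi> * u xs)"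
  shows "n = 4 \<and> (\<exists>J c. orth_complex_structure n J \<and>
            (\<forall>a<n. \<forall>b<n. u [a, b] = c * J b a))"
proof -
  obtain m where m: "n = 4 * m" using n_half_even by auto
  have "n = 4"
  proof (rule ccontr)
    assume "n \<noteq> 4"
    then have "n div 2 \<ge> 4" using m n_pos by (cases m) auto
    then interpret rank_one_weitzenboeck n "n div 2" R eps lam u
      using m curv eps weyl_vanish u_form u_sd R_eq by unfold_locales auto
    show False using form_eq_0 u_nz by simp
  qed
  moreover have "n div 2 = 2" using \<open>n = 4\<close> by simp
  ultimately show ?thesis
    using self_dual_2form_complex_structure_dim4[of u eps] u_form u_nz eps u_sd by simp
qed

end
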